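(* For $n>2$, let $Q=G_{n+1}^2/N$ where $N$ is the normal subgroup generated by all elements $a_{i(n+1)}a_{j(n+1)}a_{i(n+1)}^{-1}a_{j(n+1)}^{-1}$, $i,j\in\{1,\dots,n\}$. Then the assignment $\kappa(a_{ij})=a_{ij}$ for $\{i,j\}\subset\{1,\dots,n\}$ and $\kappa(\tau_i)=a_{i(n+1)}$ extends to a well-defined group homomorphism $\kappa\colon G_{n,\mathcal{D}}^2\to Q$.
   Context: $G_{N}^2$ is the group with generators $a_{ij}=a_{\{i,j\}}$ for $2$-element subsets $\{i,j\}\subset\{1,\dots,N\}$ and relations $a_{ij}^2=1$; $a_{ij}a_{kl}=a_{kl}a_{ij}$ for distinct $i,j,k,l$; $a_{ij}a_{ik}a_{jk}=a_{jk}a_{ik}a_{ij}$ for distinct $i,j,k$. $G_{n,\mathcal{D}}^2$ has generators $a_{ij}$ ($\{i,j\}\subset\{1,\dots,n\}$) and $\tau_i$ ($1\le i\le n$) with relations: $a_{ij}^2=1$; $a_{ij}a_{kl}=a_{kl}a_{ij}$ for distinct $i,j,k,l$; $a_{ij}a_{ik}a_{jk}=a_{jk}a_{ik}a_{ij}$ for distinct $i,j,k$; $\tau_i^2=1$; $\tau_i\tau_j=\tau_j\tau_i$; $\tau_i\tau_ja_{ij}\tau_j\tau_i=a_{ij}$; $a_{ij}\tau_k=\tau_ka_{ij}$ for distinct $i,j,k$. *)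

theory Defs
  imports "HOL-Algebra.Algebra"
begin

text \<open>A word is a list of letters (x, b); b = True means the inverse letter x^-1.\<close>
type_synonym 'a word = "('a \<times> bool) list"

definition words :: "'a set \<Rightarrow> 'a word set" where
  "words S = lists (S \<times> UNIV)"

definition inv_word :: "'a word \<Rightarrow> 'a word" where
  "inv_word w = rev (map (\<lambda>(x, b). (x, \<not> b)) w)"

definition lt :: "'a \<Rightarrow> 'a word" where
  "lt x = [(x, False)]"

inductive_set pres_rel :: "'a set \<Rightarrow> 'a word set \<Rightarrow> ('a word \<times> 'a word) set"
  for S R where
  refl: "w \<in> words S \<Longrightarrow> (w, w) \<in> pres_rel S R"
| sym: "(u, v) \<in> pres_rel S R \<Longrightarrow> (v, u) \<in> pres_rel S R"
| trans: "(u, v) \<in> pres_rel S R \<Longrightarrow> (v, w) \<in> pres_rel S R \<Longrightarrow> (u, w) \<in> pres_rel S R"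
| cancel: "u \<in> words S \<Longrightarrow> v \<in> words S \<Longrightarrow> x \<in> S \<Longrightarrow>
           (u @ [(x, b), (x, \<not> b)] @ v, u @ v) \<in> pres_rel S R"
| relator: "u \<in> words S \<Longrightarrow> v \<in> words S \<Longrightarrow> r \<in> R \<Longrightarrow> r \<in> words S \<Longrightarrow>
           (u @ r @ v, u @ v) \<in> pres_rel S R"

definition presented_group :: "'a set \<Rightarrow> 'a word set \<Rightarrow> 'a word set monoid" where
  "presented_group S R =
     \<lparr> carrier = words S // pres_rel S R,
       monoid.mult = (\<lambda>A B. \<Union>a\<in>A. \<Union>b\<in>B. pres_rel S R `` {a @ b}),
       monoid.one = pres_rel S R `` {[]} \<rparr>"

definition pgen :: "'a set \<Rightarrow> 'a word set \<Rightarrow> 'a \<Rightarrow> 'a word set" where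
  "pgen S R x = pres_rel S R `` {lt x}"

definition normal_closure :: "('a, 'b) monoid_scheme \<Rightarrow> 'a set \<Rightarrow> 'a set" where
  "normal_closure G H =
     generate G {g \<otimes>\<^bsub>G\<^esub> h \<otimes>\<^bsub>G\<^esub> inv\<^bsub>G\<^esub> g | g h. g \<in> carrier G \<and> h \<in> H}"

text \<open>Generators a_ij = a_{i,j} are indexed by 2-element subsets {i,j} of {1..N}.\<close>
definition G2_gens :: "nat \<Rightarrow> nat set set" where
  "G2_gens N = {{i, j} | i j. i \<in> {1..N} \<and> j \<in> {1..N} \<and> i \<noteq> j}"

definition G2_rels :: "nat \<Rightarrow> nat set word set" where
  "G2_rels N =
     {lt {i,j} @ lt {i,j} | i j. i \<in> {1..N} \<and> j \<in> {1..N} \<and> i \<noteq> j}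
   \<union> {lt {i,j} @ lt {k,l} @ inv_word (lt {k,l} @ lt {i,j}) | i j k l.
        i \<in> {1..N} \<and> j \<in> {1..N} \<and> k \<in> {1..N} \<and> l \<in> {1..N} \<and> distinct [i, j, k, l]}
   \<union> {lt {i,j} @ lt {i,k} @ lt {j,k} @ inv_word (lt {j,k} @ lt {i,k} @ lt {i,j}) | i j k.
        i \<in> {1..N} \<and> j \<in> {1..N} \<and> k \<in> {1..N} \<and> distinct [i, j, k]}"

definition G2 :: "nat \<Rightarrow> nat set word set monoid" where
  "G2 N = presented_group (G2_gens N) (G2_rels N)"

definition a2 :: "nat \<Rightarrow> nat \<Rightarrow> nat \<Rightarrow> nat set word set" where
  "a2 N i j = pgen (G2_gens N) (G2_rels N) {i, j}"

datatype gD = A "nat set" | Tau nat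

definition GD_gens :: "nat \<Rightarrow> gD set" where
  "GD_gens n = {A {i, j} | i j. i \<in> {1..n} \<and> j \<in> {1..n} \<and> i \<noteq> j} \<union> {Tau i | i. i \<in> {1..n}}"

definition GD_rels :: "nat \<Rightarrow> gD word set" where
  "GD_rels n =
     {lt (A {i,j}) @ lt (A {i,j}) | i j. i \<in> {1..n} \<and> j \<in> {1..n} \<and> i \<noteq> j}
   \<union> {lt (A {i,j}) @ lt (A {k,l}) @ inv_word (lt (A {k,l}) @ lt (A {i,j})) | i j k l.
        i \<in> {1..n} \<and> j \<in> {1..n} \<and> k \<in> {1..n} \<and> l \<in> {1..n} \<and> distinct [i, j, k, l]}
   \<union> {lt (A {i,j}) @ lt (A {i,k}) @ lt (A {j,k}) @
        inv_word (lt (A {j,k}) @ lt (A {i,k}) @ lt (A {i,j})) | i j k.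
        i \<in> {1..n} \<and> j \<in> {1..n} \<and> k \<in> {1..n} \<and> distinct [i, j, k]}
   \<union> {lt (Tau i) @ lt (Tau i) | i. i \<in> {1..n}}
   \<union> {lt (Tau i) @ lt (Tau j) @ inv_word (lt (Tau j) @ lt (Tau i)) | i j.
        i \<in> {1..n} \<and> j \<in> {1..n}}
   \<union> {lt (Tau i) @ lt (Tau j) @ lt (A {i,j}) @ lt (Tau j) @ lt (Tau i) @ inv_word (lt (A {i,j})) | i j.
        i \<in> {1..n} \<and> j \<in> {1..n} \<and> i \<noteq> j}
   \<union> {lt (A {i,j}) @ lt (Tau k) @ inv_word (lt (Tau k) @ lt (A {i,j})) | i j k.
        i \<in> {1..n} \<and> j \<in> {1..n} \<and> k \<in> {1..n} \<and> distinct [i, j, k]}"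

definition GD :: "nat \<Rightarrow> gD word set monoid" where
  "GD n = presented_group (GD_gens n) (GD_rels n)"

definition aD :: "nat \<Rightarrow> nat \<Rightarrow> nat \<Rightarrow> gD word set" where
  "aD n i j = pgen (GD_gens n) (GD_rels n) (A {i, j})"

definition tauD :: "nat \<Rightarrow> nat \<Rightarrow> gD word set" where
  "tauD n i = pgen (GD_gens n) (GD_rels n) (Tau i)"

definition NQ :: "nat \<Rightarrow> nat set word set set" where
  "NQ n = normal_closure (G2 (Suc n))
     {a2 (Suc n) i (Suc n) \<otimes>\<^bsub>G2 (Suc n)\<^esub> a2 (Suc n) j (Suc n)
        \<otimes>\<^bsub>G2 (Suc n)\<^esub> inv\<^bsub>G2 (Suc n)\<^esub> (a2 (Suc n) i (Suc n))
        \<otimes>\<^bsub>G2 (Suc n)\<^esub> inv\<^bsub>G2 (Suc n)\<^esub> (a2 (Suc n) j (Suc n)) | i j. i \<in> {1..n} \<and> j \<in> {1..n}}"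

definition Q :: "nat \<Rightarrow> nat set word set set monoid" where
  "Q n = G2 (Suc n) Mod NQ n"

end

theory Submission
  imports Defs
begin

text \<open>
  Sending \<open>a\<^sub>i\<^sub>j\<close> to \<open>a\<^sub>i\<^sub>j\<close> and \<open>\<tau>\<^sub>i\<close> to \<open>a\<^bsub>i(n+1)\<^esub>\<close>, every defining relation of
  \<open>G\<^sub>n\<^sub>,\<^sub>D\<^sup>2\<close> becomes a relation of \<open>G\<^bsub>n+1\<^esub>\<^sup>2\<close>, except \<open>\<tau>\<^sub>i\<tau>\<^sub>j = \<tau>\<^sub>j\<tau>\<^sub>i\<close>, which holds
  in \<open>Q\<close> because \<open>N\<close> contains the commutators of the \<open>a\<^bsub>i(n+1)\<^esub>\<close>, and
  \<open>\<tau>\<^sub>i\<tau>\<^sub>ja\<^sub>i\<^sub>j\<tau>\<^sub>j\<tau>\<^sub>i = a\<^sub>i\<^sub>j\<close>: with \<open>x = a\<^bsub>i(n+1)\<^esub>\<close>, \<open>y = a\<^bsub>j(n+1)\<^esub>\<close> the tetrahedron relation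
  gives \<open>a\<^sub>i\<^sub>j y x = x y a\<^sub>i\<^sub>j\<close>, so \<open>x y a\<^sub>i\<^sub>j y x = (x y)\<^sup>2 a\<^sub>i\<^sub>j = a\<^sub>i\<^sub>j\<close>, as \<open>x\<close>, \<open>y\<close> are
  commuting involutions in \<open>Q\<close>. Von Dyck's theorem then yields \<open>\<kappa>\<close>.
\<close>

section \<open>Presented groups\<close>

lemma words_append [simp]: "u @ v \<in> words S \<longleftrightarrow> u \<in> words S \<and> v \<in> words S"
  by (auto simp: words_def)

lemma words_Cons [simp]: "(x, b) # v \<in> words S \<longleftrightarrow> x \<in> S \<and> v \<in> words S"
  by (auto simp: words_def)

lemma words_Nil [simp]: "[] \<in> words S"
  by (simp add: words_def)

lemma lt_in_words [simp]: "lt x \<in> words S \<longleftrightarrow> x \<in> S"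
  by (simp add: lt_def)

lemma inv_word_Nil [simp]: "inv_word [] = []"
  by (simp add: inv_word_def)

lemma inv_word_Cons [simp]: "inv_word ((x, b) # w) = inv_word w @ [(x, \<not> b)]"
  by (simp add: inv_word_def)

lemma inv_word_append [simp]: "inv_word (u @ v) = inv_word v @ inv_word u"
  by (simp add: inv_word_def)

lemma inv_word_lt [simp]: "inv_word (lt x) = [(x, True)]"
  by (simp add: lt_def)

lemma inv_word_in_words [simp]: "inv_word w \<in> words S \<longleftrightarrow> w \<in> words S"
  by (induction w) auto

lemma pres_rel_words: "(u, v) \<in> pres_rel S R \<Longrightarrow> u \<in> words S \<and> v \<in> words S"
  by (induction rule: pres_rel.induct) auto

lemma equiv_pres_rel: "equiv (words S) (pres_rel S R)"
  unfolding equiv_def refl_on_def sym_def trans_def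
  using pres_rel_words pres_rel.refl pres_rel.sym pres_rel.trans by (metis subrelI SigmaI)

lemma pres_rel_in_context:
  assumes "(u, v) \<in> pres_rel S R" "a \<in> words S" "b \<in> words S"
  shows "(a @ u @ b, a @ v @ b) \<in> pres_rel S R"
  using assms
proof (induction rule: pres_rel.induct)
  case (refl w)
  then show ?case by (simp add: pres_rel.refl)
next
  case (sym u v)
  then show ?case by (simp add: pres_rel.sym)
next
  case (trans u v w)
  then show ?case by (meson pres_rel.trans)
next
  case (cancel u v x c)
  then show ?case using pres_rel.cancel[of "a @ u" S "v @ b" x c R] by simp
next
  case (relator u v r)
  then show ?case using pres_rel.relator[of "a @ u" S "v @ b" r R] by simp
qed

lemma pres_rel_append:
  assumes "(u, u') \<in> pres_rel S R" "(v, v') \<in> pres_rel S R"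
  shows "(u @ v, u' @ v') \<in> pres_rel S R"
proof -
  have words: "u' \<in> words S" "v \<in> words S"
    using assms pres_rel_words by blast+
  have "(u @ v, u' @ v) \<in> pres_rel S R"
    using pres_rel_in_context[OF assms(1), of "[]" v] words by simp
  moreover have "(u' @ v, u' @ v') \<in> pres_rel S R"
    using pres_rel_in_context[OF assms(2), of u' "[]"] words by simp
  ultimately show ?thesis by (rule pres_rel.trans)
qed

lemma inv_word_append_pres_rel_Nil: "w \<in> words S \<Longrightarrow> (inv_word w @ w, []) \<in> pres_rel S R"
proof (induction w)
  case Nil
  then show ?case by (simp add: pres_rel.refl)
next
  case (Cons c w)
  obtain x b where c: "c = (x, b)" by fastforce
  have "(inv_word w @ [(x, \<not> b), (x, \<not> \<not> b)] @ w, inv_word w @ w) \<in> pres_rel S R"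
    using Cons c by (intro pres_rel.cancel) auto
  moreover have "(inv_word w @ w, []) \<in> pres_rel S R"
    using Cons c by simp
  ultimately show ?case using c pres_rel.trans by fastforce
qed

lemma carrier_presented_group: "carrier (presented_group S R) = words S // pres_rel S R"
  by (simp add: presented_group_def)

lemma one_presented_group: "\<one>\<^bsub>presented_group S R\<^esub> = pres_rel S R `` {[]}"
  by (simp add: presented_group_def)

lemma pres_rel_class_in_carrier:
  "w \<in> words S \<Longrightarrow> pres_rel S R `` {w} \<in> carrier (presented_group S R)"
  by (simp add: carrier_presented_group quotientI)

lemma presented_group_carrierE:
  assumes "U \<in> carrier (presented_group S R)"
  obtains w where "w \<in> words S" "U = pres_rel S R `` {w}"
  using assms by (auto simp: carrier_presented_group elim!: quotientE)

lemma presented_group_mult_class: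
  assumes "u \<in> words S" "v \<in> words S"
  shows "pres_rel S R `` {u} \<otimes>\<^bsub>presented_group S R\<^esub> pres_rel S R `` {v}
         = pres_rel S R `` {u @ v}"
proof -
  have "u \<in> pres_rel S R `` {u}" "v \<in> pres_rel S R `` {v}"
    using assms pres_rel.refl by auto
  then have "(\<Union>a\<in>pres_rel S R `` {u}. \<Union>b\<in>pres_rel S R `` {v}. pres_rel S R `` {a @ b})
             = pres_rel S R `` {u @ v}"
    using pres_rel_append pres_rel.trans by blast
  then show ?thesis by (simp add: presented_group_def)
qed

lemma group_presented_group: "group (presented_group S R)"
proof (rule groupI)
  fix U V W
  assume "U \<in> carrier (presented_group S R)" "V \<in> carrier (presented_group S R)"
    "W \<in> carrier (presented_group S R)"
  then show "U \<otimes>\<^bsub>presented_group S R\<^esub> V \<in> carrier (presented_group S R)"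
    and "U \<otimes>\<^bsub>presented_group S R\<^esub> V \<otimes>\<^bsub>presented_group S R\<^esub> W =
         U \<otimes>\<^bsub>presented_group S R\<^esub> (V \<otimes>\<^bsub>presented_group S R\<^esub> W)"
    by (elim presented_group_carrierE; simp add: presented_group_mult_class pres_rel_class_in_carrier)+
next
  fix U
  assume "U \<in> carrier (presented_group S R)"
  then obtain w where w: "w \<in> words S" "U = pres_rel S R `` {w}"
    by (rule presented_group_carrierE)
  then show "\<one>\<^bsub>presented_group S R\<^esub> \<otimes>\<^bsub>presented_group S R\<^esub> U = U"
    using presented_group_mult_class[of "[]" S w R] by (simp add: one_presented_group)
  have "pres_rel S R `` {inv_word w @ w} = pres_rel S R `` {[]}"
    using inv_word_append_pres_rel_Nil[OF w(1)] equiv_pres_rel equiv_class_eq by metis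
  then show "\<exists>V\<in>carrier (presented_group S R).
               V \<otimes>\<^bsub>presented_group S R\<^esub> U = \<one>\<^bsub>presented_group S R\<^esub>"
    using w presented_group_mult_class[of "inv_word w" S w R]
    by (intro bexI[of _ "pres_rel S R `` {inv_word w}"])
       (auto simp: one_presented_group pres_rel_class_in_carrier)
qed (simp add: one_presented_group pres_rel_class_in_carrier)

lemma pgen_in_carrier: "x \<in> S \<Longrightarrow> pgen S R x \<in> carrier (presented_group S R)"
  by (simp add: pgen_def pres_rel_class_in_carrier)

section \<open>Evaluating words in a group\<close>

definition eval_word :: "('g, 'm) monoid_scheme \<Rightarrow> ('a \<Rightarrow> 'g) \<Rightarrow> 'a word \<Rightarrow> 'g" where
  "eval_word G f w = foldr (\<lambda>(x, b) y. (if b then inv\<^bsub>G\<^esub> (f x) else f x) \<otimes>\<^bsub>G\<^esub> y) w \<one>\<^bsub>G\<^esub>"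

lemma eval_word_Nil [simp]: "eval_word G f [] = \<one>\<^bsub>G\<^esub>"
  by (simp add: eval_word_def)

lemma eval_word_Cons [simp]:
  "eval_word G f ((x, b) # w) = (if b then inv\<^bsub>G\<^esub> (f x) else f x) \<otimes>\<^bsub>G\<^esub> eval_word G f w"
  by (simp add: eval_word_def)

context group
begin

lemma eval_word_closed: "f \<in> S \<rightarrow> carrier G \<Longrightarrow> w \<in> words S \<Longrightarrow> eval_word G f w \<in> carrier G"
  by (induction w) (auto simp: Pi_iff)

lemma eval_word_append:
  assumes "f \<in> S \<rightarrow> carrier G" "u \<in> words S" "v \<in> words S"
  shows "eval_word G f (u @ v) = eval_word G f u \<otimes> eval_word G f v"
  using assms(2)
proof (induction u)
  case (Cons c u)
  then show ?case
    using assms by (cases c) (auto simp: m_assoc Pi_iff eval_word_closed[OF assms(1)])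
qed (simp add: eval_word_closed[OF assms(1,3)])

lemma eval_word_lt: "f \<in> S \<rightarrow> carrier G \<Longrightarrow> x \<in> S \<Longrightarrow> eval_word G f (lt x) = f x"
  by (auto simp: lt_def Pi_iff)

lemma eval_word_inv_word:
  assumes "f \<in> S \<rightarrow> carrier G"
  shows "w \<in> words S \<Longrightarrow> eval_word G f (inv_word w) = inv (eval_word G f w)"
proof (induction w)
  case (Cons c w)
  obtain x b where c: "c = (x, b)" by fastforce
  have fx: "f x \<in> carrier G" and w: "w \<in> words S"
    using Cons c assms by auto
  have "eval_word G f (inv_word (c # w)) = inv (eval_word G f w) \<otimes> eval_word G f [(x, \<not> b)]"
    using c Cons w fx eval_word_append[OF assms] by simp
  also have "\<dots> = inv ((if b then inv (f x) else f x) \<otimes> eval_word G f w)"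
    using fx eval_word_closed[OF assms w] by (simp add: inv_mult_group)
  finally show ?case using c by simp
qed simp

lemma eval_word_append_inv_word_eq_one_iff:
  assumes "f \<in> S \<rightarrow> carrier G" "u \<in> words S" "v \<in> words S"
  shows "eval_word G f (u @ inv_word v) = \<one> \<longleftrightarrow> eval_word G f u = eval_word G f v"
proof -
  have "a \<otimes> inv b = \<one> \<longleftrightarrow> a = b" if "a \<in> carrier G" "b \<in> carrier G" for a b
    using that by (metis inv_closed inv_equality inv_inv r_inv)
  then show ?thesis
    using assms by (simp add: eval_word_append eval_word_inv_word eval_word_closed)
qed

lemma eval_word_respects_pres_rel:
  assumes f: "f \<in> S \<rightarrow> carrier G"
    and relators: "\<And>r. r \<in> R \<Longrightarrow> r \<in> words S \<Longrightarrow> eval_word G f r = \<one>"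
  shows "(u, v) \<in> pres_rel S R \<Longrightarrow> eval_word G f u = eval_word G f v"
proof (induction rule: pres_rel.induct)
  case (cancel u v x b)
  have "eval_word G f [(x, b), (x, \<not> b)] = \<one>" "[(x, b), (x, \<not> b)] \<in> words S"
    using cancel f by (auto simp: Pi_iff)
  with cancel show ?case
    by (simp only: eval_word_append[OF f] words_append) (simp add: eval_word_closed[OF f])
next
  case (relator u v r)
  then show ?case
    by (simp add: eval_word_append[OF f] eval_word_closed[OF f] relators)
qed auto

end

lemma hom_eval_word:
  assumes "group G" "group H" "h \<in> hom G H" "f \<in> S \<rightarrow> carrier G" "w \<in> words S"
  shows "h (eval_word G f w) = eval_word H (h \<circ> f) w"
proof -
  interpret group_hom G H h
    using assms(1-3) by (simp add: group_hom_def group_hom_axioms_def)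
  show ?thesis
    using assms(4,5) by (induction w) (auto simp: G.eval_word_closed Pi_iff)
qed

lemma presented_group_universal:
  assumes H: "group H" and f: "f \<in> S \<rightarrow> carrier H"
    and relators: "\<And>r. r \<in> R \<Longrightarrow> r \<in> words S \<Longrightarrow> eval_word H f r = \<one>\<^bsub>H\<^esub>"
  obtains \<phi> where "\<phi> \<in> hom (presented_group S R) H" "\<And>x. x \<in> S \<Longrightarrow> \<phi> (pgen S R x) = f x"
proof -
  interpret H: group H by (rule H)
  define \<phi> where "\<phi> U = eval_word H f (SOME w. w \<in> U)" for U
  have \<phi>_class: "\<phi> (pres_rel S R `` {w}) = eval_word H f w" if "w \<in> words S" for w
  proof -
    have "w \<in> pres_rel S R `` {w}"
      using that pres_rel.refl by auto
    then have "(w, SOME w'. w' \<in> pres_rel S R `` {w}) \<in> pres_rel S R"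
      by (metis Image_singleton_iff someI)
    then show ?thesis
      unfolding \<phi>_def using H.eval_word_respects_pres_rel[OF f relators] by metis
  qed
  have "\<phi> \<in> hom (presented_group S R) H"
  proof (rule homI)
    fix U V
    assume "U \<in> carrier (presented_group S R)" "V \<in> carrier (presented_group S R)"
    then show "\<phi> U \<in> carrier H"
      and "\<phi> (U \<otimes>\<^bsub>presented_group S R\<^esub> V) = \<phi> U \<otimes>\<^bsub>H\<^esub> \<phi> V"
      by (elim presented_group_carrierE;
          simp add: \<phi>_class presented_group_mult_class H.eval_word_closed[OF f] H.eval_word_append[OF f])+
  qed
  moreover have "\<phi> (pgen S R x) = f x" if "x \<in> S" for x
    using that f by (simp add: pgen_def \<phi>_class H.eval_word_lt)
  ultimately show ?thesis using that by blast
qed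

lemma eval_word_pgen:
  "w \<in> words S \<Longrightarrow> eval_word (presented_group S R) (pgen S R) w = pres_rel S R `` {w}"
proof (induction w)
  case (Cons c w)
  obtain x b where c: "c = (x, b)" by fastforce
  let ?P = "presented_group S R"
  interpret P: group ?P by (rule group_presented_group)
  have x: "x \<in> S" "w \<in> words S"
    using Cons c by auto
  have "([] @ [(x, True), (x, \<not> True)] @ [], [] @ []) \<in> pres_rel S R"
    using x by (intro pres_rel.cancel) auto
  then have "pres_rel S R `` {[(x, True)]} \<otimes>\<^bsub>?P\<^esub> pgen S R x = \<one>\<^bsub>?P\<^esub>"
    using x presented_group_mult_class[of "[(x, True)]" S "[(x, False)]" R]
      equiv_class_eq[OF equiv_pres_rel]
    by (simp add: pgen_def lt_def one_presented_group)
  then have "inv\<^bsub>?P\<^esub> (pgen S R x) = pres_rel S R `` {[(x, True)]}"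
    using x by (intro P.inv_equality) (auto intro: pgen_in_carrier pres_rel_class_in_carrier)
  then show ?case
    using c Cons x presented_group_mult_class[of "[(x, b)]" S w R]
    by (cases b) (simp_all add: pgen_def lt_def)
qed (simp add: one_presented_group)

lemma eval_word_pgen_relator:
  assumes "r \<in> R" "r \<in> words S"
  shows "eval_word (presented_group S R) (pgen S R) r = \<one>\<^bsub>presented_group S R\<^esub>"
proof -
  have "([] @ r @ [], [] @ []) \<in> pres_rel S R"
    using assms by (intro pres_rel.relator) auto
  then have "pres_rel S R `` {r} = pres_rel S R `` {[]}"
    by (simp add: equiv_class_eq[OF equiv_pres_rel])
  then show ?thesis
    by (simp add: eval_word_pgen[OF assms(2)] one_presented_group)
qed

lemma (in group) normal_closure_normal:
  assumes "H \<subseteq> carrier G"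
  shows "normal_closure G H \<lhd> G"
  unfolding normal_closure_def
proof (rule normal_generateI)
  show "{g \<otimes> h \<otimes> inv g | g h. g \<in> carrier G \<and> h \<in> H} \<subseteq> carrier G"
    using assms by auto
next
  fix k g
  assume k: "k \<in> {g \<otimes> h \<otimes> inv g | g h. g \<in> carrier G \<and> h \<in> H}" and g: "g \<in> carrier G"
  then obtain g' h where "k = g' \<otimes> h \<otimes> inv g'" "g' \<in> carrier G" "h \<in> H"
    by blast
  moreover from this have "g \<otimes> k \<otimes> inv g = (g \<otimes> g') \<otimes> h \<otimes> inv (g \<otimes> g')"
    using assms g by (simp add: inv_mult_group m_assoc subsetD)
  ultimately show "g \<otimes> k \<otimes> inv g \<in> {g \<otimes> h \<otimes> inv g | g h. g \<in> carrier G \<and> h \<in> H}"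
    using g by blast
qed

lemma (in group) subset_normal_closure:
  assumes "H \<subseteq> carrier G"
  shows "H \<subseteq> normal_closure G H"
proof
  fix h
  assume "h \<in> H"
  then have "h = \<one> \<otimes> h \<otimes> inv \<one>" "\<one> \<in> carrier G"
    using assms by auto
  with \<open>h \<in> H\<close> show "h \<in> normal_closure G H"
    unfolding normal_closure_def by (blast intro: generate.incl)
qed

lemma (in normal) rcos_mult_commute:
  assumes "a \<in> carrier G" "b \<in> carrier G" "a \<otimes> b \<otimes> inv a \<otimes> inv b \<in> H"
  shows "(H #> a) <#> (H #> b) = (H #> b) <#> (H #> a)"
proof -
  have "a \<otimes> b \<otimes> inv a \<otimes> inv b = a \<otimes> b \<otimes> inv (b \<otimes> a)"
    using assms(1,2) by (simp add: inv_mult_group m_assoc)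
  with assms have c: "a \<otimes> b \<otimes> inv (b \<otimes> a) \<in> H"
    by simp
  have "H #> (a \<otimes> b) = H #> (a \<otimes> b \<otimes> inv (b \<otimes> a) \<otimes> (b \<otimes> a))"
    using assms(1,2) by (simp add: m_assoc)
  also have "\<dots> = (H #> (a \<otimes> b \<otimes> inv (b \<otimes> a))) #> (b \<otimes> a)"
    using assms(1,2) by (simp add: coset_mult_assoc subset)
  also have "\<dots> = H #> (b \<otimes> a)"
    using assms(1,2) c by (simp add: coset_join2 subgroup_axioms)
  finally show ?thesis
    using assms by (simp add: rcos_sum)
qed

section \<open>Groups satisfying the relations of \<open>G\<^sub>N\<^sup>2\<close>\<close>

lemma insert_in_G2_gens: "i \<in> {1..N} \<Longrightarrow> j \<in> {1..N} \<Longrightarrow> i \<noteq> j \<Longrightarrow> {i, j} \<in> G2_gens N"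
  unfolding G2_gens_def by blast

lemma a2_in_carrier: "i \<in> {1..N} \<Longrightarrow> j \<in> {1..N} \<Longrightarrow> i \<noteq> j \<Longrightarrow> a2 N i j \<in> carrier (G2 N)"
  unfolding a2_def G2_def by (intro pgen_in_carrier insert_in_G2_gens)

lemma G2_group: "group (G2 N)"
  by (simp add: G2_def group_presented_group)

lemma G2_rels_words: "G2_rels N \<subseteq> words (G2_gens N)"
  unfolding G2_rels_def by (auto simp: insert_in_G2_gens)

locale G2_relations = group G for G (structure) +
  fixes N :: nat and x :: "nat set \<Rightarrow> 'a"
  assumes gens_closed: "x \<in> G2_gens N \<rightarrow> carrier G"
    and relators: "r \<in> G2_rels N \<Longrightarrow> eval_word G x r = \<one>"
begin

lemma gen_closed: "i \<in> {1..N} \<Longrightarrow> j \<in> {1..N} \<Longrightarrow> i \<noteq> j \<Longrightarrow> x {i, j} \<in> carrier G"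
  using gens_closed insert_in_G2_gens by blast

lemma relator_eq:
  "u @ inv_word v \<in> G2_rels N \<Longrightarrow> u \<in> words (G2_gens N) \<Longrightarrow> v \<in> words (G2_gens N) \<Longrightarrow>
   eval_word G x u = eval_word G x v"
  using relators eval_word_append_inv_word_eq_one_iff[OF gens_closed] by blast

lemma involution:
  assumes "i \<in> {1..N}" "j \<in> {1..N}" "i \<noteq> j"
  shows "x {i, j} \<otimes> x {i, j} = \<one>"
proof -
  have "lt {i, j} @ lt {i, j} \<in> G2_rels N"
    unfolding G2_rels_def using assms by blast
  then show ?thesis
    using relators gen_closed[OF assms] by (force simp: lt_def)
qed

lemma far_commute:
  assumes "i \<in> {1..N}" "j \<in> {1..N}" "k \<in> {1..N}" "l \<in> {1..N}" "distinct [i, j, k, l]"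
  shows "x {i, j} \<otimes> x {k, l} = x {k, l} \<otimes> x {i, j}"
proof -
  have "(lt {i, j} @ lt {k, l}) @ inv_word (lt {k, l} @ lt {i, j}) \<in> G2_rels N"
    unfolding G2_rels_def append_assoc using assms by blast
  from relator_eq[OF this] show ?thesis
    using assms insert_in_G2_gens gen_closed by (simp add: lt_def)
qed

lemma tetrahedron:
  assumes "i \<in> {1..N}" "j \<in> {1..N}" "k \<in> {1..N}" "distinct [i, j, k]"
  shows "x {i, j} \<otimes> x {i, k} \<otimes> x {j, k} = x {j, k} \<otimes> x {i, k} \<otimes> x {i, j}"
proof -
  have "(lt {i, j} @ lt {i, k} @ lt {j, k}) @ inv_word (lt {j, k} @ lt {i, k} @ lt {i, j})
        \<in> G2_rels N"
    unfolding G2_rels_def append_assoc using assms by blast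
  from relator_eq[OF this] show ?thesis
    using assms insert_in_G2_gens gen_closed by (simp add: lt_def m_assoc)
qed

end

lemma G2_relations_hom:
  assumes "group H" "h \<in> hom (G2 N) H"
  shows "G2_relations H N (h \<circ> pgen (G2_gens N) (G2_rels N))"
proof -
  have pgen: "pgen (G2_gens N) (G2_rels N) \<in> G2_gens N \<rightarrow> carrier (G2 N)"
    by (simp add: G2_def pgen_in_carrier)
  interpret group_hom "G2 N" H h
    using assms G2_group by (simp add: group_hom_def group_hom_axioms_def)
  show ?thesis
  proof
    show "h \<circ> pgen (G2_gens N) (G2_rels N) \<in> G2_gens N \<rightarrow> carrier H"
      using pgen by (auto simp: Pi_iff)
  next
    fix r
    assume r: "r \<in> G2_rels N"
    then have w: "r \<in> words (G2_gens N)"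
      using G2_rels_words by blast
    have "eval_word H (h \<circ> pgen (G2_gens N) (G2_rels N)) r
          = h (eval_word (G2 N) (pgen (G2_gens N) (G2_rels N)) r)"
      using hom_eval_word[OF G2_group assms pgen w] by simp
    also have "\<dots> = h \<one>\<^bsub>G2 N\<^esub>"
      using eval_word_pgen_relator[OF r w] by (simp add: G2_def)
    finally show "eval_word H (h \<circ> pgen (G2_gens N) (G2_rels N)) r = \<one>\<^bsub>H\<^esub>"
      by simp
  qed
qed

section \<open>From \<open>G\<^bsub>N\<^esub>\<^sup>2\<close> to \<open>G\<^sub>n\<^sub>,\<^sub>D\<^sup>2\<close>\<close>

lemma (in group) conj_by_commuting_involutions:
  assumes "a \<in> carrier G" "b \<in> carrier G" "c \<in> carrier G"
    and "a \<otimes> a = \<one>" "b \<otimes> b = \<one>" "a \<otimes> b = b \<otimes> a" "c \<otimes> b \<otimes> a = a \<otimes> b \<otimes> c"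
  shows "a \<otimes> b \<otimes> c \<otimes> b \<otimes> a = c"
proof -
  have "a \<otimes> b \<otimes> c \<otimes> b \<otimes> a = a \<otimes> b \<otimes> (c \<otimes> b \<otimes> a)"
    using assms(1-3) by (simp add: m_assoc)
  also have "\<dots> = a \<otimes> (b \<otimes> a) \<otimes> b \<otimes> c"
    using assms(1-3,7) by (simp add: m_assoc)
  also have "\<dots> = (a \<otimes> a) \<otimes> (b \<otimes> b) \<otimes> c"
    using assms(1-3) by (simp only: assms(6)[symmetric]) (simp add: m_assoc)
  also have "\<dots> = c"
    using assms(3-5) by simp
  finally show ?thesis .
qed

definition GD_assign :: "nat \<Rightarrow> (nat set \<Rightarrow> 'g) \<Rightarrow> gD \<Rightarrow> 'g" where
  "GD_assign N x g = (case g of A s \<Rightarrow> x s | Tau i \<Rightarrow> x {i, N})"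

lemma GD_assign_simps [simp]:
  "GD_assign N x (A s) = x s" "GD_assign N x (Tau i) = x {i, N}"
  by (simp_all add: GD_assign_def)

lemma A_in_GD_gens: "i \<in> {1..n} \<Longrightarrow> j \<in> {1..n} \<Longrightarrow> i \<noteq> j \<Longrightarrow> A {i, j} \<in> GD_gens n"
  unfolding GD_gens_def by blast

lemma Tau_in_GD_gens: "i \<in> {1..n} \<Longrightarrow> Tau i \<in> GD_gens n"
  unfolding GD_gens_def by blast

context G2_relations
begin

lemma GD_assign_closed:
  assumes "n < N"
  shows "GD_assign N x \<in> GD_gens n \<rightarrow> carrier G"
  using assms by (auto simp: GD_gens_def intro!: gen_closed)

lemma GD_relators:
  assumes "n < N"
    and comm: "\<And>i j. i \<in> {1..n} \<Longrightarrow> j \<in> {1..n} \<Longrightarrow> x {i, N} \<otimes> x {j, N} = x {j, N} \<otimes> x {i, N}"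
    and "r \<in> GD_rels n"
  shows "eval_word G (GD_assign N x) r = \<one>"
proof -
  let ?f = "GD_assign N x"
  have below_N: "i \<in> {1..N}" "i \<noteq> N" if "i \<in> {1..n}" for i
    using that \<open>n < N\<close> by auto
  have N: "N \<in> {1..N}"
    using \<open>n < N\<close> by simp
  have relator_of_eq: "eval_word G ?f (u @ inv_word v) = \<one>"
    if "u \<in> words (GD_gens n)" "v \<in> words (GD_gens n)" "eval_word G ?f u = eval_word G ?f v" for u v
    using that eval_word_append_inv_word_eq_one_iff[OF GD_assign_closed[OF \<open>n < N\<close>]] by blast
  have r1: "eval_word G ?f (lt (A {i, j}) @ lt (A {i, j})) = \<one>"
    if "i \<in> {1..n}" "j \<in> {1..n}" "i \<noteq> j" for i j
    using that below_N involution gen_closed by (simp add: lt_def)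
  have r2: "eval_word G ?f (lt (A {i, j}) @ lt (A {k, l}) @ inv_word (lt (A {k, l}) @ lt (A {i, j}))) = \<one>"
    if "i \<in> {1..n}" "j \<in> {1..n}" "k \<in> {1..n}" "l \<in> {1..n}" "distinct [i, j, k, l]" for i j k l
    using relator_of_eq[of "lt (A {i, j}) @ lt (A {k, l})" "lt (A {k, l}) @ lt (A {i, j})"]
      that below_N far_commute[of i j k l] gen_closed A_in_GD_gens
    by (simp add: lt_def)
  have r3: "eval_word G ?f (lt (A {i, j}) @ lt (A {i, k}) @ lt (A {j, k}) @
              inv_word (lt (A {j, k}) @ lt (A {i, k}) @ lt (A {i, j}))) = \<one>"
    if "i \<in> {1..n}" "j \<in> {1..n}" "k \<in> {1..n}" "distinct [i, j, k]" for i j k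
    using relator_of_eq[of "lt (A {i, j}) @ lt (A {i, k}) @ lt (A {j, k})"
        "lt (A {j, k}) @ lt (A {i, k}) @ lt (A {i, j})"]
      that below_N tetrahedron[of i j k] gen_closed A_in_GD_gens
    by (simp add: lt_def m_assoc)
  have r4: "eval_word G ?f (lt (Tau i) @ lt (Tau i)) = \<one>" if "i \<in> {1..n}" for i
    using that below_N N involution gen_closed by (simp add: lt_def)
  have r5: "eval_word G ?f (lt (Tau i) @ lt (Tau j) @ inv_word (lt (Tau j) @ lt (Tau i))) = \<one>"
    if "i \<in> {1..n}" "j \<in> {1..n}" for i j
    using relator_of_eq[of "lt (Tau i) @ lt (Tau j)" "lt (Tau j) @ lt (Tau i)"]
      that below_N N comm gen_closed Tau_in_GD_gens
    by (simp add: lt_def)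
  have r6: "eval_word G ?f (lt (Tau i) @ lt (Tau j) @ lt (A {i, j}) @ lt (Tau j) @ lt (Tau i) @
              inv_word (lt (A {i, j}))) = \<one>"
    if "i \<in> {1..n}" "j \<in> {1..n}" "i \<noteq> j" for i j
  proof -
    have "x {i, N} \<otimes> x {j, N} \<otimes> x {i, j} \<otimes> x {j, N} \<otimes> x {i, N} = x {i, j}"
    proof (rule conj_by_commuting_involutions)
      show "x {i, j} \<otimes> x {j, N} \<otimes> x {i, N} = x {i, N} \<otimes> x {j, N} \<otimes> x {i, j}"
        using tetrahedron[of j i N] that below_N N by (simp add: insert_commute)
    qed (use that below_N N involution comm gen_closed in auto)
    then show ?thesis
      using relator_of_eq[of "lt (Tau i) @ lt (Tau j) @ lt (A {i, j}) @ lt (Tau j) @ lt (Tau i)"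
          "lt (A {i, j})"]
        that below_N N gen_closed A_in_GD_gens Tau_in_GD_gens
      by (simp add: lt_def m_assoc)
  qed
  have r7: "eval_word G ?f (lt (A {i, j}) @ lt (Tau k) @ inv_word (lt (Tau k) @ lt (A {i, j}))) = \<one>"
    if "i \<in> {1..n}" "j \<in> {1..n}" "k \<in> {1..n}" "distinct [i, j, k]" for i j k
    using relator_of_eq[of "lt (A {i, j}) @ lt (Tau k)" "lt (Tau k) @ lt (A {i, j})"]
      that below_N N far_commute[of i j k N] gen_closed A_in_GD_gens Tau_in_GD_gens
    by (simp add: lt_def)
  show ?thesis
    using \<open>r \<in> GD_rels n\<close> unfolding GD_rels_def
    by (elim UnE CollectE exE conjE; simp only: r1 r2 r3 r4 r5 r6 r7 simp_thms)
qed

end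

lemma NQ_normal: "NQ n \<lhd> G2 (Suc n)"
proof -
  interpret group "G2 (Suc n)"
    by (rule G2_group)
  show ?thesis
    unfolding NQ_def using a2_in_carrier[of _ "Suc n" "Suc n"]
    by (intro normal_closure_normal) auto
qed

lemma commutator_in_NQ:
  assumes "i \<in> {1..n}" "j \<in> {1..n}"
  shows "a2 (Suc n) i (Suc n) \<otimes>\<^bsub>G2 (Suc n)\<^esub> a2 (Suc n) j (Suc n)
           \<otimes>\<^bsub>G2 (Suc n)\<^esub> inv\<^bsub>G2 (Suc n)\<^esub> (a2 (Suc n) i (Suc n))
           \<otimes>\<^bsub>G2 (Suc n)\<^esub> inv\<^bsub>G2 (Suc n)\<^esub> (a2 (Suc n) j (Suc n)) \<in> NQ n"
proof -
  interpret group "G2 (Suc n)"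
    by (rule G2_group)
  show ?thesis
    unfolding NQ_def using assms a2_in_carrier[of _ "Suc n" "Suc n"]
    by (intro subset_normal_closure[THEN subsetD]) auto
qed

theorem mainTheorem7:
  fixes n :: nat
  assumes "n > 2"
  shows "\<exists>\<kappa> \<in> hom (GD n) (Q n).
           (\<forall>i \<in> {1..n}. \<forall>j \<in> {1..n}. i \<noteq> j \<longrightarrow>
              \<kappa> (aD n i j) = NQ n #>\<^bsub>G2 (Suc n)\<^esub> a2 (Suc n) i j)
         \<and> (\<forall>i \<in> {1..n}. \<kappa> (tauD n i) = NQ n #>\<^bsub>G2 (Suc n)\<^esub> a2 (Suc n) i (Suc n))"
proof -
  interpret normal "NQ n" "G2 (Suc n)"
    by (rule NQ_normal)
  define x where "x = (\<lambda>a. NQ n #>\<^bsub>G2 (Suc n)\<^esub> a) \<circ> pgen (G2_gens (Suc n)) (G2_rels (Suc n))"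
  interpret Q: G2_relations "Q n" "Suc n" x
    unfolding x_def Q_def
    by (intro G2_relations_hom factorgroup_is_group r_coset_hom_Mod)
  have comm: "x {i, Suc n} \<otimes>\<^bsub>Q n\<^esub> x {j, Suc n} = x {j, Suc n} \<otimes>\<^bsub>Q n\<^esub> x {i, Suc n}"
    if "i \<in> {1..n}" "j \<in> {1..n}" for i j
    unfolding x_def Q_def mult_FactGroup comp_def a2_def[symmetric]
    by (rule rcos_mult_commute)
      (use that commutator_in_NQ[OF that] a2_in_carrier[of _ "Suc n" "Suc n"] in auto)
  have closed: "GD_assign (Suc n) x \<in> GD_gens n \<rightarrow> carrier (Q n)"
    by (rule Q.GD_assign_closed) simp
  have relators: "eval_word (Q n) (GD_assign (Suc n) x) r = \<one>\<^bsub>Q n\<^esub>" if "r \<in> GD_rels n" for r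
    by (rule Q.GD_relators[OF _ comm that]) simp_all
  obtain \<kappa> where \<kappa>: "\<kappa> \<in> hom (GD n) (Q n)"
    "\<And>g. g \<in> GD_gens n \<Longrightarrow> \<kappa> (pgen (GD_gens n) (GD_rels n) g) = GD_assign (Suc n) x g"
    using presented_group_universal[OF Q.is_group closed relators] unfolding GD_def by blast
  show ?thesis
  proof (intro bexI[OF _ \<kappa>(1)] conjI ballI impI)
    fix i j
    assume "i \<in> {1..n}" "j \<in> {1..n}" "i \<noteq> j"
    then show "\<kappa> (aD n i j) = NQ n #>\<^bsub>G2 (Suc n)\<^esub> a2 (Suc n) i j"
      using \<kappa>(2)[OF A_in_GD_gens] by (simp add: aD_def x_def a2_def)
  next
    fix i
    assume "i \<in> {1..n}"
    then show "\<kappa> (tauD n i) = NQ n #>\<^bsub>G2 (Suc n)\<^esub> a2 (Suc n) i (Suc n)"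
      using \<kappa>(2)[OF Tau_in_GD_gens] by (simp add: tauD_def x_def a2_def)
  qed
qed

end
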